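(* Let $B$ be a preorder on $\mathcal{SC}$. Then $\rho\dashv_B\mathsf{dual}(\rho)$ for every $\rho\in\mathcal{SC}$.
   Context: Fix base types $BT$ with preorder $\leq_{\mathsf b}$ and labels $\mathcal L$. Contract terms: $\sigma::=\mathbf 1\mid ?\mathtt t.\sigma\mid !\mathtt t.\sigma\mid !(\sigma).\sigma\mid ?(\sigma).\sigma\mid \sum_{i\in I}?l_i.\sigma_i\mid \bigoplus_{i\in I}!l_i.\sigma_i\mid \mu x.\sigma\mid x$ ($I$ finite nonempty, labels distinct). $\mathcal{SC}$ = closed guarded terms (guarded: in each $\mu x.\sigma'$, $x$ occurs in $\sigma'$ only under constructors other than $\mu$). A substitution $s$ is a finite partial map from variables to $\mathcal{SC}$; $\sigma s$ replaces free occurrences of $x\in\mathrm{dom}(s)$ by $s(x)$ (under $\mu y$ the variable $y$ is removed from the domain). LTS: $\mathbf 1\xrightarrow\checkmark$; $\lambda.\sigma\xrightarrow\lambda\sigma$ for prefixes (including $!l.\sigma$); $\bigoplus_{i\in I}!l_i.\sigma_i\xrightarrow\tau!l_i.\sigma_i$ for $|I|>1$; $\sum ?l_i.\sigma_i\xrightarrow{?l_i}\sigma_i$; $\mu x.\sigma\xrightarrow\tau\sigma[\mu x.\sigma/x]$. $\lambda_1\bowtie_B\lambda_2$ iff the pair is $(!l,?l)$, $(?l,!l)$, $(!\mathtt t_1,?\mathtt t_2)$ with $\mathtt t_1\leq_{\mathsf b}\mathtt t_2$, $(?\mathtt t_1,!\mathtt t_2)$ with $\mathtt t_2\leq_{\mathsf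 b}\mathtt t_1$, $(!(\sigma_1),?(\sigma_2))$ with $\sigma_1B\sigma_2$, $(?(\sigma_1),!(\sigma_2))$ with $\sigma_2B\sigma_1$. $\rho\|\sigma\xrightarrow\tau_B$ by a $\tau$ of either side, or $\rho\|\sigma\xrightarrow\tau_B\rho'\|\sigma'$ if $\rho\xrightarrow{\lambda_1}\rho'$, $\sigma\xrightarrow{\lambda_2}\sigma'$, $\lambda_1\bowtie_B\lambda_2$. $\dashv_B$: greatest $R\subseteq\mathcal{SC}^2$ with $\rho R\sigma$ implying (i) if $\rho\|\sigma$ has no $\xrightarrow\tau_B$ move then $\rho\xrightarrow\checkmark$ and $\sigma\xrightarrow\checkmark$; (ii) every $\rho\|\sigma\xrightarrow\tau_B\rho'\|\sigma'$ has $\rho'R\sigma'$. Standard dual $\overline{\cdot}$ (messages unchanged): $\overline{\mathbf 1}=\mathbf 1$, $\overline x=x$, $\overline{\mu x.\sigma}=\mu x.\overline\sigma$, $\overline{?\mathtt t.\sigma}=!\mathtt t.\overline\sigma$, $\overline{!\mathtt t.\sigma}=?\mathtt t.\overline\sigma$, $\overline{?(\sigma^m).\sigma}=!(\sigma^m).\overline\sigma$, $\overline{!(\sigma^m).\sigma}=?(\sigma^m).\overline\sigma$, $\overline{\sum_i ?l_i.\sigma_i}=\bigoplus_i !l_i.\overline{\sigma_i}$, $\overline{\bigoplus_i !l_i.\sigma_i}=\sum_i ?l_i.\overline{\sigma_i}$. M-closure: for $\sigma$ and substitution $s$ with free variables of $\sigma$ in $\mathrm{dom}(s)$, $\mathrm{mclo}(\sigma,s)$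 is: $\mathbf 1\mapsto\mathbf 1$; $x\mapsto x$; $!(\sigma^m).\sigma'\mapsto!(\sigma^m s).\mathrm{mclo}(\sigma',s)$; $?(\sigma^m).\sigma'\mapsto?(\sigma^m s).\mathrm{mclo}(\sigma',s)$; $?\mathtt t.\sigma'\mapsto?\mathtt t.\mathrm{mclo}(\sigma',s)$; $!\mathtt t.\sigma'\mapsto!\mathtt t.\mathrm{mclo}(\sigma',s)$; $\sum_i ?l_i.\sigma_i\mapsto\sum_i ?l_i.\mathrm{mclo}(\sigma_i,s)$; $\bigoplus_i !l_i.\sigma_i\mapsto\bigoplus_i !l_i.\mathrm{mclo}(\sigma_i,s)$; $\mu x.\sigma'\mapsto\mu x.\mathrm{mclo}(\sigma',s')$ where $s'$ maps $x$ to the closed term $(\mu x.\sigma')s$ and agrees with $s$ elsewhere. $\mathrm{mcl}(\sigma)=\mathrm{mclo}(\sigma,\varepsilon)$ ($\varepsilon$ empty substitution), and $\mathsf{dual}(\rho)=\overline{\mathrm{mcl}(\rho)}$. *)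

theory Defs
  imports Main
begin

text \<open>External sums and internal choices are lists of (label, continuation) pairs;
  well-formedness (nonempty, distinct labels) is part of the predicate SC.
  The single-branch internal choice Int [(l,s)] is the prefix !l.s,
  the single-branch external sum Ext [(l,s)] is the prefix ?l.s.\<close>

datatype ('b, 'l) ctr =
    One
  | InT 'b "('b, 'l) ctr"
  | OutT 'b "('b, 'l) ctr"
  | OutS "('b, 'l) ctr" "('b, 'l) ctr"
  | InS "('b, 'l) ctr" "('b, 'l) ctr"
  | Ext "('l \<times> ('b, 'l) ctr) list"
  | Intc "('l \<times> ('b, 'l) ctr) list"
  | Mu nat "('b, 'l) ctr"
  | Var nat

fun fv :: "('b, 'l) ctr \<Rightarrow> nat set" where
  "fv One = {}"
| "fv (InT t s) = fv s"
| "fv (OutT t s) = fv s"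
| "fv (OutS m s) = fv m \<union> fv s"
| "fv (InS m s) = fv m \<union> fv s"
| "fv (Ext xs) = (\<Union>p\<in>set xs. fv (snd p))"
| "fv (Intc xs) = (\<Union>p\<in>set xs. fv (snd p))"
| "fv (Mu x s) = fv s - {x}"
| "fv (Var x) = {x}"

fun exposed :: "nat \<Rightarrow> ('b, 'l) ctr \<Rightarrow> bool" where
  "exposed x (Var y) = (x = y)"
| "exposed x (Mu y s) = (x \<noteq> y \<and> exposed x s)"
| "exposed x _ = False"

fun guarded_wf :: "('b, 'l) ctr \<Rightarrow> bool" where
  "guarded_wf One = True"
| "guarded_wf (InT t s) = guarded_wf s"
| "guarded_wf (OutT t s) = guarded_wf s"
| "guarded_wf (OutS m s) = (guarded_wf m \<and> guarded_wf s)"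
| "guarded_wf (InS m s) = (guarded_wf m \<and> guarded_wf s)"
| "guarded_wf (Ext xs) = (xs \<noteq> [] \<and> distinct (map fst xs) \<and> (\<forall>p\<in>set xs. guarded_wf (snd p)))"
| "guarded_wf (Intc xs) = (xs \<noteq> [] \<and> distinct (map fst xs) \<and> (\<forall>p\<in>set xs. guarded_wf (snd p)))"
| "guarded_wf (Mu x s) = (\<not> exposed x s \<and> guarded_wf s)"
| "guarded_wf (Var x) = True"

definition SC :: "('b, 'l) ctr set" where
  "SC = {s. fv s = {} \<and> guarded_wf s}"

fun subst :: "(nat \<Rightarrow> ('b, 'l) ctr option) \<Rightarrow> ('b, 'l) ctr \<Rightarrow> ('b, 'l) ctr" where
  "subst sb One = One"
| "subst sb (InT t s) = InT t (subst sb s)"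
| "subst sb (OutT t s) = OutT t (subst sb s)"
| "subst sb (OutS m s) = OutS (subst sb m) (subst sb s)"
| "subst sb (InS m s) = InS (subst sb m) (subst sb s)"
| "subst sb (Ext xs) = Ext (map (\<lambda>p. (fst p, subst sb (snd p))) xs)"
| "subst sb (Intc xs) = Intc (map (\<lambda>p. (fst p, subst sb (snd p))) xs)"
| "subst sb (Mu y s) = Mu y (subst (sb(y := None)) s)"
| "subst sb (Var x) = (case sb x of Some t \<Rightarrow> t | None \<Rightarrow> Var x)"

datatype ('b, 'l) act =
    Check
  | Tau
  | AInT 'b | AOutT 'b
  | AInS "('b, 'l) ctr" | AOutS "('b, 'l) ctr"
  | AInL 'l | AOutL 'l

text \<open>The checkmark transition of One has no meaningful target; we use One.\<close>
inductive step :: "('b, 'l) ctr \<Rightarrow> ('b, 'l) act \<Rightarrow> ('b, 'l) ctr \<Rightarrow> bool" where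
  s_one: "step One Check One"
| s_int: "step (InT t s) (AInT t) s"
| s_outt: "step (OutT t s) (AOutT t) s"
| s_ins: "step (InS m s) (AInS m) s"
| s_outs: "step (OutS m s) (AOutS m) s"
| s_outl: "step (Intc [(l, s)]) (AOutL l) s"
| s_intc: "length xs > 1 \<Longrightarrow> (l, s) \<in> set xs \<Longrightarrow> step (Intc xs) Tau (Intc [(l, s)])"
| s_ext: "(l, s) \<in> set xs \<Longrightarrow> step (Ext xs) (AInL l) s"
| s_mu: "step (Mu x s) Tau (subst (Map.empty(x \<mapsto> Mu x s)) s)"

fun bowtie :: "('b \<times> 'b) set \<Rightarrow> (('b, 'l) ctr \<times> ('b, 'l) ctr) set
    \<Rightarrow> ('b, 'l) act \<Rightarrow> ('b, 'l) act \<Rightarrow> bool" where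
  "bowtie Lb B (AOutL l1) (AInL l2) = (l1 = l2)"
| "bowtie Lb B (AInL l1) (AOutL l2) = (l1 = l2)"
| "bowtie Lb B (AOutT t1) (AInT t2) = ((t1, t2) \<in> Lb)"
| "bowtie Lb B (AInT t1) (AOutT t2) = ((t2, t1) \<in> Lb)"
| "bowtie Lb B (AOutS s1) (AInS s2) = ((s1, s2) \<in> B)"
| "bowtie Lb B (AInS s1) (AOutS s2) = ((s2, s1) \<in> B)"
| "bowtie Lb B _ _ = False"

inductive sys_step :: "('b \<times> 'b) set \<Rightarrow> (('b, 'l) ctr \<times> ('b, 'l) ctr) set
    \<Rightarrow> ('b, 'l) ctr \<Rightarrow> ('b, 'l) ctr \<Rightarrow> ('b, 'l) ctr \<Rightarrow> ('b, 'l) ctr \<Rightarrow> bool" where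
  sys_left: "step r Tau r' \<Longrightarrow> sys_step Lb B r s r' s"
| sys_right: "step s Tau s' \<Longrightarrow> sys_step Lb B r s r s'"
| sys_sync: "step r a1 r' \<Longrightarrow> step s a2 s' \<Longrightarrow> bowtie Lb B a1 a2 \<Longrightarrow> sys_step Lb B r s r' s'"

definition compliance_rel :: "('b \<times> 'b) set \<Rightarrow> (('b, 'l) ctr \<times> ('b, 'l) ctr) set
    \<Rightarrow> (('b, 'l) ctr \<times> ('b, 'l) ctr) set \<Rightarrow> bool" where
  "compliance_rel Lb B R \<longleftrightarrow> R \<subseteq> SC \<times> SC \<and>
     (\<forall>r s. (r, s) \<in> R \<longrightarrow>
        ((\<not> (\<exists>r' s'. sys_step Lb B r s r' s')) \<longrightarrow>
             (\<exists>r'. step r Check r') \<and> (\<exists>s'. step s Check s')) \<and>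
        (\<forall>r' s'. sys_step Lb B r s r' s' \<longrightarrow> (r', s') \<in> R))"

text \<open>The greatest such relation is the union of all of them.\<close>
definition compliant :: "('b \<times> 'b) set \<Rightarrow> (('b, 'l) ctr \<times> ('b, 'l) ctr) set
    \<Rightarrow> ('b, 'l) ctr \<Rightarrow> ('b, 'l) ctr \<Rightarrow> bool" where
  "compliant Lb B r s \<longleftrightarrow> (r, s) \<in> \<Union>{R. compliance_rel Lb B R}"

fun cdual :: "('b, 'l) ctr \<Rightarrow> ('b, 'l) ctr" where
  "cdual One = One"
| "cdual (Var x) = Var x"
| "cdual (Mu x s) = Mu x (cdual s)"
| "cdual (InT t s) = OutT t (cdual s)"
| "cdual (OutT t s) = InT t (cdual s)"
| "cdual (InS m s) = OutS m (cdual s)"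
| "cdual (OutS m s) = InS m (cdual s)"
| "cdual (Ext xs) = Intc (map (\<lambda>p. (fst p, cdual (snd p))) xs)"
| "cdual (Intc xs) = Ext (map (\<lambda>p. (fst p, cdual (snd p))) xs)"

fun mclo :: "('b, 'l) ctr \<Rightarrow> (nat \<Rightarrow> ('b, 'l) ctr option) \<Rightarrow> ('b, 'l) ctr" where
  "mclo One sb = One"
| "mclo (Var x) sb = Var x"
| "mclo (OutS m s) sb = OutS (subst sb m) (mclo s sb)"
| "mclo (InS m s) sb = InS (subst sb m) (mclo s sb)"
| "mclo (InT t s) sb = InT t (mclo s sb)"
| "mclo (OutT t s) sb = OutT t (mclo s sb)"
| "mclo (Ext xs) sb = Ext (map (\<lambda>p. (fst p, mclo (snd p) sb)) xs)"
| "mclo (Intc xs) sb = Intc (map (\<lambda>p. (fst p, mclo (snd p) sb)) xs)"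
| "mclo (Mu x s) sb = Mu x (mclo s (sb(x \<mapsto> subst sb (Mu x s))))"

definition mcl :: "('b, 'l) ctr \<Rightarrow> ('b, 'l) ctr" where
  "mcl s = mclo s Map.empty"

definition dual :: "('b, 'l) ctr \<Rightarrow> ('b, 'l) ctr" where
  "dual r = cdual (mcl r)"

end

theory Submission
  imports Defs
begin

text \<open>
  The dual of \<open>\<rho>\<close> mirrors \<open>\<rho>\<close> action by action, and every output faces the identical input,
  so synchronisation only needs reflexivity of the two preorders. The obstacle is recursion:
  unfolding \<open>\<mu>x.\<sigma>\<close> substitutes \<open>\<mu>x.\<sigma>\<close> for \<open>x\<close> inside messages as well, which the dual of the
  unfolded body would not reproduce. M-closure removes the obstacle, since it has already
  substituted the enclosing recursions into every message; as a consequence unfolding commutes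
  with \<open>dual\<close> on closed guarded contracts. The compliance witness consists of the pairs
  \<open>(\<rho>, dual \<rho>')\<close> where \<open>\<rho>\<close> and \<open>\<rho>'\<close> unfold to a common contract, together with the states in
  which one party has committed to a branch of its internal choice while the other still offers
  the whole external sum.
\<close>

section \<open>Closed substitutions\<close>

definition closed_subst :: "(nat \<Rightarrow> ('b, 'l) ctr option) \<Rightarrow> bool" where
  "closed_subst sb \<longleftrightarrow> (\<forall>v\<in>ran sb. fv v = {})"

lemma closed_subst_restrict: "closed_subst sb \<Longrightarrow> closed_subst (sb(x := None))"
  by (auto simp: closed_subst_def ran_def)

lemma closed_subst_upd: "closed_subst sb \<Longrightarrow> fv v = {} \<Longrightarrow> closed_subst (sb(x \<mapsto> v))"
  by (auto simp: closed_subst_def ran_def)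

lemma closed_subst_add: "closed_subst \<tau> \<Longrightarrow> closed_subst sb \<Longrightarrow> closed_subst (\<tau> ++ sb)"
  by (auto simp: closed_subst_def ran_def map_add_def split: option.splits)

lemma closed_substD: "closed_subst sb \<Longrightarrow> sb x = Some v \<Longrightarrow> fv v = {}"
  by (auto simp: closed_subst_def ran_def)

lemma exposed_imp_fv: "exposed x t \<Longrightarrow> x \<in> fv t"
  by (induct x t rule: exposed.induct) auto

lemma fv_subst: "closed_subst sb \<Longrightarrow> fv (subst sb t) = fv t - dom sb"
proof (induct sb t rule: subst.induct)
  case (9 sb x)
  then show ?case by (auto dest: closed_substD split: option.splits)
qed (auto simp: closed_subst_restrict)

lemma closed_subst_upd_Mu:
  "closed_subst sb \<Longrightarrow> fv (Mu x s) \<subseteq> dom sb \<Longrightarrow> closed_subst (sb(x \<mapsto> subst sb (Mu x s)))"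
  by (metis Diff_eq_empty_iff closed_subst_upd fv_subst)

lemma subst_cong: "\<forall>x\<in>fv t. sb x = sb' x \<Longrightarrow> subst sb t = subst sb' t"
proof (induct sb t arbitrary: sb' rule: subst.induct)
  case (8 sb y s)
  have "\<forall>x\<in>fv s. (sb(y := None)) x = (sb'(y := None)) x" using 8(2) by auto
  with 8(1) show ?case by (simp add: fun_upd_def)
qed auto

lemma subst_id: "fv t \<inter> dom sb = {} \<Longrightarrow> subst sb t = t"
proof (induct sb t rule: subst.induct)
  case (6 sb xs)
  have "subst sb (snd p) = snd p" if "p \<in> set xs" for p
    using 6 that by (simp add: disjoint_iff) blast
  then show ?case by (simp add: map_idI)
next
  case (7 sb xs)
  have "subst sb (snd p) = snd p" if "p \<in> set xs" for p
    using 7 that by (simp add: disjoint_iff) blast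
  then show ?case by (simp add: map_idI)
next
  case (8 sb y s)
  have "fv s \<inter> dom (sb(y := None)) = {}" using 8(2) by auto
  with 8(1) show ?case by (simp add: fun_upd_def)
qed (auto split: option.splits)

lemma subst_empty [simp]: "subst Map.empty t = t"
  by (rule subst_id) auto

lemma subst_closed: "fv t = {} \<Longrightarrow> subst sb t = t"
  by (rule subst_id) auto

lemma subst_subst: "closed_subst sb \<Longrightarrow> subst \<tau> (subst sb t) = subst (\<tau> ++ sb) t"
proof (induct sb t arbitrary: \<tau> rule: subst.induct)
  case (8 sb y s)
  have e: "\<tau>(y := None) ++ sb(y := None) = (\<tau> ++ sb)(y := None)"
    by (auto simp: map_add_def split: option.splits)
  show ?case
    using 8(1)[of "\<tau>(y := None)"] closed_subst_restrict[OF 8(2), of y] e by (simp add: fun_upd_def)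
next
  case (9 sb x)
  then show ?case by (auto simp: map_add_def subst_closed dest: closed_substD split: option.splits)
qed auto

lemma exposed_subst: "closed_subst sb \<Longrightarrow> exposed y (subst sb t) \<Longrightarrow> exposed y t"
proof (induct sb t rule: subst.induct)
  case (8 sb z s)
  have "exposed y (subst (sb(z := None)) s)" using 8(3) by (auto split: if_splits)
  with 8(1) closed_subst_restrict[OF 8(2), of z] 8(3) show ?case by (auto simp: fun_upd_def)
next
  case (9 sb x)
  then show ?case by (auto dest: closed_substD exposed_imp_fv split: option.splits)
qed auto

lemma closed_subst_if_ran_SC: "ran sb \<subseteq> SC \<Longrightarrow> closed_subst sb"
  by (auto simp: closed_subst_def SC_def)

lemma ran_restrict_subset: "ran (sb(x := None)) \<subseteq> ran sb"
  by (auto simp: ran_def)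

lemma ran_upd_subset: "ran (sb(x \<mapsto> v)) \<subseteq> insert v (ran sb)"
  by (auto simp: ran_def)

lemma guarded_wf_subst: "ran sb \<subseteq> SC \<Longrightarrow> guarded_wf t \<Longrightarrow> guarded_wf (subst sb t)"
proof (induct sb t rule: subst.induct)
  case (8 sb y s)
  have ran: "ran (sb(y := None)) \<subseteq> SC" using ran_restrict_subset 8(2) by (rule order_trans)
  have "\<not> exposed y (subst (sb(y := None)) s)"
    using exposed_subst[OF closed_subst_if_ran_SC[OF ran]] 8(3) by auto
  moreover have "guarded_wf (subst (sb(y := None)) s)"
    using 8(1) ran 8(3) by (simp add: fun_upd_def)
  ultimately show ?case by simp
next
  case (9 sb x)
  then show ?case by (cases "sb x") (auto simp: SC_def dest: ranI)
qed (auto simp: comp_def)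

lemma SC_subst:
  assumes ran: "ran sb \<subseteq> SC" and "guarded_wf t" and "fv t \<subseteq> dom sb"
  shows "subst sb t \<in> SC"
  using assms fv_subst[OF closed_subst_if_ran_SC[OF ran], of t] guarded_wf_subst[OF ran]
  by (auto simp: SC_def)

section \<open>M-closure and duality\<close>

lemma exposed_mclo [simp]: "exposed y (mclo t \<tau>) = exposed y t"
  by (induct t \<tau> rule: mclo.induct) (auto simp: fun_upd_def)

lemma exposed_cdual [simp]: "exposed y (cdual t) = exposed y t"
  by (induct t rule: cdual.induct) auto

lemma fv_cdual [simp]: "fv (cdual t) = fv t"
  by (induct t rule: cdual.induct) auto

lemma guarded_wf_cdual [simp]: "guarded_wf (cdual t) = guarded_wf t"
  by (induct t rule: cdual.induct) (auto simp: comp_def)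

lemma fv_mclo: "closed_subst \<tau> \<Longrightarrow> fv t \<subseteq> dom \<tau> \<Longrightarrow> fv (mclo t \<tau>) \<subseteq> fv t"
proof (induct t \<tau> rule: mclo.induct)
  case (3 m s sb)
  then show ?case using fv_subst[OF 3(2), of m] by auto
next
  case (4 m s sb)
  then show ?case using fv_subst[OF 4(2), of m] by auto
next
  case (7 xs sb)
  have "fv (mclo (snd p) sb) \<subseteq> fv (snd p)" if "p \<in> set xs" for p
    using 7 that by (simp add: UN_subset_iff)
  then show ?case by auto
next
  case (8 xs sb)
  have "fv (mclo (snd p) sb) \<subseteq> fv (snd p)" if "p \<in> set xs" for p
    using 8 that by (simp add: UN_subset_iff)
  then show ?case by auto
next
  case (9 x s sb)
  have "closed_subst (sb(x \<mapsto> subst sb (Mu x s)))" using closed_subst_upd_Mu 9(2,3) .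
  moreover have "fv s \<subseteq> dom (sb(x \<mapsto> subst sb (Mu x s)))" using 9(3) by auto
  ultimately show ?case using 9(1) by (auto simp: fun_upd_def)
qed auto

lemma guarded_wf_mclo:
  "ran \<tau> \<subseteq> SC \<Longrightarrow> fv t \<subseteq> dom \<tau> \<Longrightarrow> guarded_wf t \<Longrightarrow> guarded_wf (mclo t \<tau>)"
proof (induct t \<tau> rule: mclo.induct)
  case (3 m s sb)
  then show ?case using guarded_wf_subst[OF 3(2), of m] by simp
next
  case (4 m s sb)
  then show ?case using guarded_wf_subst[OF 4(2), of m] by simp
next
  case (7 xs sb)
  have "guarded_wf (mclo (snd p) sb)" if "p \<in> set xs" for p
    using 7 that by (simp add: UN_subset_iff)
  then show ?case using 7(4) by (simp add: comp_def)
next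
  case (8 xs sb)
  have "guarded_wf (mclo (snd p) sb)" if "p \<in> set xs" for p
    using 8 that by (simp add: UN_subset_iff)
  then show ?case using 8(4) by (simp add: comp_def)
next
  case (9 x s sb)
  have "subst sb (Mu x s) \<in> SC" using SC_subst[OF 9(2) 9(4) 9(3)] .
  then have "ran (sb(x \<mapsto> subst sb (Mu x s))) \<subseteq> SC"
    using 9(2) ran_upd_subset by fastforce
  moreover have "fv s \<subseteq> dom (sb(x \<mapsto> subst sb (Mu x s)))" using 9(3) by auto
  ultimately show ?case using 9(1) 9(4) by (auto simp: fun_upd_def)
qed auto

lemma mclo_cong: "\<forall>x\<in>fv t. \<tau> x = \<tau>' x \<Longrightarrow> mclo t \<tau> = mclo t \<tau>'"
proof (induct t \<tau> arbitrary: \<tau>' rule: mclo.induct)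
  case (3 m s sb)
  then show ?case using subst_cong[of m sb \<tau>'] by simp
next
  case (4 m s sb)
  then show ?case using subst_cong[of m sb \<tau>'] by simp
next
  case (9 x s sb)
  have "subst sb (Mu x s) = subst \<tau>' (Mu x s)" using 9(2) by (intro subst_cong) auto
  then have "\<forall>z\<in>fv s. (sb(x \<mapsto> subst sb (Mu x s))) z = (\<tau>'(x \<mapsto> subst \<tau>' (Mu x s))) z"
    using 9(2) by auto
  with 9(1) show ?case by (simp add: fun_upd_def)
qed auto

lemma mclo_closed: "fv t = {} \<Longrightarrow> mclo t \<tau> = mcl t"
  unfolding mcl_def by (rule mclo_cong) simp

fun closed_msgs :: "('b, 'l) ctr \<Rightarrow> bool" where
  "closed_msgs One = True"
| "closed_msgs (InT t s) = closed_msgs s"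
| "closed_msgs (OutT t s) = closed_msgs s"
| "closed_msgs (OutS m s) = (fv m = {} \<and> closed_msgs s)"
| "closed_msgs (InS m s) = (fv m = {} \<and> closed_msgs s)"
| "closed_msgs (Ext xs) = (\<forall>p\<in>set xs. closed_msgs (snd p))"
| "closed_msgs (Intc xs) = (\<forall>p\<in>set xs. closed_msgs (snd p))"
| "closed_msgs (Mu x s) = closed_msgs s"
| "closed_msgs (Var x) = True"

lemma closed_msgs_mclo: "closed_subst \<tau> \<Longrightarrow> fv t \<subseteq> dom \<tau> \<Longrightarrow> closed_msgs (mclo t \<tau>)"
proof (induct t \<tau> rule: mclo.induct)
  case (3 m s sb)
  then show ?case using fv_subst[OF 3(2), of m] by auto
next
  case (4 m s sb)
  then show ?case using fv_subst[OF 4(2), of m] by auto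
next
  case (7 xs sb)
  then show ?case by (simp add: UN_subset_iff)
next
  case (8 xs sb)
  then show ?case by (simp add: UN_subset_iff)
next
  case (9 x s sb)
  have "closed_subst (sb(x \<mapsto> subst sb (Mu x s)))" using closed_subst_upd_Mu 9(2,3) .
  moreover have "fv s \<subseteq> dom (sb(x \<mapsto> subst sb (Mu x s)))" using 9(3) by auto
  ultimately show ?case using 9(1) by (auto simp: fun_upd_def)
qed auto

lemma cdual_subst:
  "closed_msgs t \<Longrightarrow> cdual (subst \<sigma> t) = subst (\<lambda>z. map_option cdual (\<sigma> z)) (cdual t)"
proof (induct \<sigma> t rule: subst.induct)
  case (8 sb y s)
  have "(\<lambda>z. map_option cdual ((sb(y := None)) z)) = (\<lambda>z. map_option cdual (sb z))(y := None)"
    by auto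
  with 8 show ?case by (simp add: fun_upd_def)
next
  case (9 sb x)
  then show ?case by (auto split: option.splits)
qed (auto simp: subst_closed)

lemma mclo_subst:
  assumes "closed_subst sb" and "closed_subst \<tau>" and "fv s \<subseteq> dom \<tau> \<union> dom sb"
  shows "mclo (subst sb s) \<tau> = subst (\<lambda>z. map_option mcl (sb z)) (mclo s (\<tau> ++ sb))"
  using assms
proof (induct sb s arbitrary: \<tau> rule: subst.induct)
  case (4 sb m s)
  have "fv (subst (\<tau> ++ sb) m) = {}"
    using fv_subst[OF closed_subst_add[OF 4(4,3)], of m] 4(5) by auto
  then show ?case using 4 subst_subst[OF 4(3), of \<tau> m] by (simp add: subst_closed)
next
  case (5 sb m s)
  have "fv (subst (\<tau> ++ sb) m) = {}"
    using fv_subst[OF closed_subst_add[OF 5(4,3)], of m] 5(5) by auto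
  then show ?case using 5 subst_subst[OF 5(3), of \<tau> m] by (simp add: subst_closed)
next
  case (6 sb xs)
  have "mclo (subst sb (snd p)) \<tau> = subst (\<lambda>z. map_option mcl (sb z)) (mclo (snd p) (\<tau> ++ sb))"
    if "p \<in> set xs" for p
    using 6 that by (simp add: UN_subset_iff)
  then show ?case by simp
next
  case (7 sb xs)
  have "mclo (subst sb (snd p)) \<tau> = subst (\<lambda>z. map_option mcl (sb z)) (mclo (snd p) (\<tau> ++ sb))"
    if "p \<in> set xs" for p
    using 7 that by (simp add: UN_subset_iff)
  then show ?case by simp
next
  case (8 sb y t)
  define v where "v = subst (\<tau> ++ sb) (Mu y t)"
  have "fv v = {}"
    using fv_subst[OF closed_subst_add[OF 8(3,2)], of "Mu y t"] 8(4) unfolding v_def by auto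
  then have "closed_subst (\<tau>(y \<mapsto> v))" using 8(3) by (rule closed_subst_upd[rotated])
  moreover have "fv t \<subseteq> dom (\<tau>(y \<mapsto> v)) \<union> dom (sb(y := None))" using 8(4) by auto
  ultimately have "mclo (subst (sb(y := None)) t) (\<tau>(y \<mapsto> v)) =
      subst (\<lambda>z. map_option mcl ((sb(y := None)) z)) (mclo t (\<tau>(y \<mapsto> v) ++ sb(y := None)))"
    using 8(1)[of "\<tau>(y \<mapsto> v)"] closed_subst_restrict[OF 8(2), of y] by (simp add: fun_upd_def)
  also have "\<tau>(y \<mapsto> v) ++ sb(y := None) = (\<tau> ++ sb)(y \<mapsto> v)"
    by (auto simp: map_add_def split: option.splits)
  also have "(\<lambda>z. map_option mcl ((sb(y := None)) z)) = (\<lambda>z. map_option mcl (sb z))(y := None)"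
    by auto
  finally have IH: "mclo (subst (sb(y := None)) t) (\<tau>(y \<mapsto> v)) =
      subst ((\<lambda>z. map_option mcl (sb z))(y := None)) (mclo t ((\<tau> ++ sb)(y \<mapsto> v)))" .
  have "mclo (subst sb (Mu y t)) \<tau> = Mu y (mclo (subst (sb(y := None)) t) (\<tau>(y \<mapsto> v)))"
    using subst_subst[OF 8(2), of \<tau> "Mu y t"] by (simp add: v_def)
  also have "\<dots> = subst (\<lambda>z. map_option mcl (sb z)) (mclo (Mu y t) (\<tau> ++ sb))"
    using IH by (simp add: v_def)
  finally show ?case .
next
  case (9 sb x)
  then show ?case by (auto simp: mclo_closed dest: closed_substD split: option.splits)
qed auto

lemma dual_simps [simp]:
  "dual One = One"
  "dual (Var x) = Var x"
  "dual (InT t s) = OutT t (dual s)"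
  "dual (OutT t s) = InT t (dual s)"
  "dual (InS m s) = OutS m (dual s)"
  "dual (OutS m s) = InS m (dual s)"
  "dual (Ext xs) = Intc (map (\<lambda>p. (fst p, dual (snd p))) xs)"
  "dual (Intc xs) = Ext (map (\<lambda>p. (fst p, dual (snd p))) xs)"
  "dual (Mu x s) = Mu x (cdual (mclo s [x \<mapsto> Mu x s]))"
  by (simp_all add: dual_def mcl_def comp_def)

lemma SC_dual: "r \<in> SC \<Longrightarrow> dual r \<in> SC"
  using fv_mclo[of Map.empty r] guarded_wf_mclo[of Map.empty r]
  by (auto simp: SC_def dual_def mcl_def closed_subst_def)

section \<open>Unfolding\<close>

fun unfold :: "('b, 'l) ctr \<Rightarrow> ('b, 'l) ctr" where
  "unfold (Mu x s) = subst [x \<mapsto> Mu x s] s"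
| "unfold r = r"

definition is_Mu :: "('b, 'l) ctr \<Rightarrow> bool" where
  "is_Mu r \<longleftrightarrow> (\<exists>x s. r = Mu x s)"

lemma unfold_not_Mu: "\<not> is_Mu r \<Longrightarrow> unfold r = r"
  by (cases r) (auto simp: is_Mu_def)

lemma is_Mu_dual [simp]: "is_Mu (dual r) = is_Mu r"
  by (cases r) (auto simp: is_Mu_def)

lemma SC_unfold: "r \<in> SC \<Longrightarrow> unfold r \<in> SC"
proof (cases r)
  case (Mu x s)
  moreover assume "r \<in> SC"
  ultimately show ?thesis by (simp, intro SC_subst) (auto simp: SC_def)
qed simp_all

lemma unfold_dual:
  assumes "r \<in> SC" shows "unfold (dual r) = dual (unfold r)"
proof (cases "is_Mu r")
  case True
  then obtain x s where r: "r = Mu x s" by (auto simp: is_Mu_def)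
  let ?sb = "[x \<mapsto> Mu x s]"
  have closed: "closed_subst ?sb" and fv_s: "fv s \<subseteq> dom ?sb"
    using assms r by (auto simp: SC_def closed_subst_def)
  have "mclo (subst ?sb s) Map.empty = subst (\<lambda>z. map_option mcl (?sb z)) (mclo s (Map.empty ++ ?sb))"
    using mclo_subst[OF closed _ , of Map.empty] fv_s by (simp add: closed_subst_def)
  also have "\<dots> = subst [x \<mapsto> mcl (Mu x s)] (mclo s ?sb)"
    by (intro arg_cong2[where f = subst] ext) auto
  finally have "dual (subst ?sb s) = cdual (subst [x \<mapsto> mcl (Mu x s)] (mclo s ?sb))"
    by (simp add: dual_def mcl_def)
  also have "\<dots> = subst (\<lambda>z. map_option cdual ([x \<mapsto> mcl (Mu x s)] z)) (cdual (mclo s ?sb))"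
    using cdual_subst[OF closed_msgs_mclo[OF closed fv_s]] .
  also have "(\<lambda>z. map_option cdual ([x \<mapsto> mcl (Mu x s)] z)) = [x \<mapsto> dual (Mu x s)]"
    by (auto simp: dual_def)
  finally have eq: "dual (subst ?sb s) = subst [x \<mapsto> dual (Mu x s)] (cdual (mclo s ?sb))" .
  have "dual (Mu x s) = Mu x (cdual (mclo s ?sb))" by simp
  then have "unfold (dual (Mu x s)) = subst [x \<mapsto> dual (Mu x s)] (cdual (mclo s ?sb))"
    by (metis unfold.simps(1))
  with eq show ?thesis unfolding r by simp
next
  case False
  then show ?thesis by (simp add: unfold_not_Mu)
qed

lemma funpow_unfold_not_Mu: "\<not> is_Mu r \<Longrightarrow> (unfold ^^ n) r = r"
  by (induct n) (simp_all add: unfold_not_Mu)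

lemma funpow_unfold_SC: "r \<in> SC \<Longrightarrow> (unfold ^^ n) r \<in> SC"
  by (induct n) (simp_all add: SC_unfold)

definition unfold_joinable :: "('b, 'l) ctr \<Rightarrow> ('b, 'l) ctr \<Rightarrow> bool" where
  "unfold_joinable r r' \<longleftrightarrow> (\<exists>m n. (unfold ^^ m) r = (unfold ^^ n) r')"

lemma unfold_joinable_refl: "unfold_joinable r r"
  unfolding unfold_joinable_def by blast

lemma unfold_joinable_sym: "unfold_joinable r r' \<Longrightarrow> unfold_joinable r' r"
  unfolding unfold_joinable_def by metis

lemma unfold_joinable_unfold_left: "unfold_joinable r r' \<Longrightarrow> unfold_joinable (unfold r) r'"
proof -
  assume "unfold_joinable r r'"
  then obtain m n where "(unfold ^^ m) r = (unfold ^^ n) r'" by (auto simp: unfold_joinable_def)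
  then have "(unfold ^^ m) (unfold r) = (unfold ^^ Suc n) r'" by (simp add: funpow_swap1[symmetric])
  then show ?thesis unfolding unfold_joinable_def by blast
qed

lemma unfold_joinable_unfold_right: "unfold_joinable r r' \<Longrightarrow> unfold_joinable r (unfold r')"
  by (metis unfold_joinable_sym unfold_joinable_unfold_left)

lemma unfold_joinable_not_Mu_right:
  "unfold_joinable r r' \<Longrightarrow> \<not> is_Mu r' \<Longrightarrow> \<exists>n. (unfold ^^ n) r = r'"
  unfolding unfold_joinable_def by (metis funpow_unfold_not_Mu)

lemma unfold_joinable_not_Mu:
  "unfold_joinable r r' \<Longrightarrow> \<not> is_Mu r \<Longrightarrow> \<not> is_Mu r' \<Longrightarrow> r = r'"
  by (metis unfold_joinable_not_Mu_right funpow_unfold_not_Mu)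

section \<open>Transitions\<close>

lemma step_SC: "step r a r' \<Longrightarrow> r \<in> SC \<Longrightarrow> r' \<in> SC"
proof (induct rule: step.induct)
  case (s_mu x s)
  then show ?case using SC_unfold[of "Mu x s"] by simp
qed (auto simp: SC_def)

lemma step_Mu: "is_Mu r \<Longrightarrow> step r a r' \<longleftrightarrow> a = Tau \<and> r' = unfold r"
  by (auto simp: is_Mu_def elim: step.cases intro: step.intros)

lemma not_Mu_if_visible_step: "step r a r' \<Longrightarrow> a \<noteq> Tau \<Longrightarrow> \<not> is_Mu r"
  by (auto simp: step_Mu)

lemma step_TauE:
  assumes "step r Tau r'"
  obtains "is_Mu r" "r' = unfold r"
    | xs l s where "r = Intc xs" "(l, s) \<in> set xs" "r' = Intc [(l, s)]"
  using assms by (cases rule: step.cases) (auto simp: is_Mu_def)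

lemma step_Intc_singleton [simp]: "step (Intc [(l, s)]) a r' \<longleftrightarrow> a = AOutL l \<and> r' = s"
  by (auto elim: step.cases intro: step.intros)

lemma step_Ext [simp]: "step (Ext xs) a r' \<longleftrightarrow> (\<exists>l. a = AInL l \<and> (l, r') \<in> set xs)"
  by (auto elim: step.cases intro: step.intros)

lemma bowtie_Tau [simp]: "\<not> bowtie Lb B Tau a" "\<not> bowtie Lb B a Tau"
  by (cases a; simp)+

lemma dual_eq_Intc: "dual r = Intc ys \<longleftrightarrow> (\<exists>xs. r = Ext xs \<and> ys = map (\<lambda>p. (fst p, dual (snd p))) xs)"
  by (cases r) auto

lemma step_dual_sync:
  assumes "step r a1 r1" and "step (dual r) a2 d1" and "bowtie Lb B a1 a2"
  shows "d1 = dual r1"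
proof (cases r)
  case (Ext xs)
  with assms obtain l l' where "(l, r1) \<in> set xs" "a1 = AInL l" "a2 = AOutL l'"
      "map (\<lambda>p. (fst p, dual (snd p))) xs = [(l', d1)]"
    by (cases a2) (auto elim: step.cases)
  then show ?thesis by (cases xs) auto
next
  case (Intc xs)
  with assms obtain l where "xs = [(l, r1)]" "a1 = AOutL l"
    by (auto elim: step.cases)
  with assms Intc show ?thesis by auto
next
  case (Mu x s)
  with assms show ?thesis by (auto simp: step_Mu is_Mu_def)
qed (use assms in \<open>auto elim: step.cases\<close>)

section \<open>The compliance witness\<close>

inductive_set dual_pairs :: "(('b, 'l) ctr \<times> ('b, 'l) ctr) set" where
  joinable: "r \<in> SC \<Longrightarrow> r' \<in> SC \<Longrightarrow> unfold_joinable r r' \<Longrightarrow> (r, dual r') \<in> dual_pairs"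
| left_committed: "r' \<in> SC \<Longrightarrow> unfold_joinable (Intc xs) r' \<Longrightarrow> (l, s) \<in> set xs \<Longrightarrow>
    (Intc [(l, s)], dual r') \<in> dual_pairs"
| right_committed: "r \<in> SC \<Longrightarrow> unfold_joinable r (Ext xs) \<Longrightarrow> (l, s) \<in> set xs \<Longrightarrow>
    (r, Intc [(l, dual s)]) \<in> dual_pairs"

lemma SC_if_unfold_joinable: "unfold_joinable r t \<Longrightarrow> \<not> is_Mu t \<Longrightarrow> r \<in> SC \<Longrightarrow> t \<in> SC"
  using unfold_joinable_not_Mu_right funpow_unfold_SC by metis

lemma SC_Intc_branch: "Intc xs \<in> SC \<Longrightarrow> (l, s) \<in> set xs \<Longrightarrow> s \<in> SC"
  by (auto simp: SC_def)

lemma SC_Ext_branch: "Ext xs \<in> SC \<Longrightarrow> (l, s) \<in> set xs \<Longrightarrow> s \<in> SC"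
  by (auto simp: SC_def)

lemma SC_Intc_singleton: "s \<in> SC \<Longrightarrow> Intc [(l, s)] \<in> SC"
  by (auto simp: SC_def)

lemma dual_pairs_SC: "dual_pairs \<subseteq> SC \<times> SC"
proof (rule subrelI)
  fix r d assume "(r, d) \<in> dual_pairs"
  then show "(r, d) \<in> SC \<times> SC"
  proof cases
    case (left_committed r' xs l s)
    then have "Intc xs \<in> SC"
      by (auto intro: SC_if_unfold_joinable unfold_joinable_sym simp: is_Mu_def)
    with left_committed show ?thesis by (auto intro: SC_Intc_singleton SC_Intc_branch SC_dual)
  next
    case (right_committed xs l s)
    then have "Ext xs \<in> SC" by (auto intro: SC_if_unfold_joinable simp: is_Mu_def)
    with right_committed show ?thesis by (auto intro: SC_Intc_singleton SC_Ext_branch SC_dual)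
  qed (auto intro: SC_dual)
qed

lemma dual_pairs_step_joinable:
  assumes r: "r \<in> SC" and r': "r' \<in> SC" and join: "unfold_joinable r r'"
    and "sys_step Lb B r (dual r') r1 d1"
  shows "(r1, d1) \<in> dual_pairs"
  using assms(4)
proof cases
  case sys_left
  from \<open>step r Tau r1\<close> show ?thesis
  proof (cases rule: step_TauE)
    case 1
    with r r' join show ?thesis
      by (auto intro: dual_pairs.joinable SC_unfold unfold_joinable_unfold_left simp: sys_left)
  next
    case (2 xs l s)
    with r' join show ?thesis by (auto intro: dual_pairs.left_committed simp: sys_left)
  qed
next
  case sys_right
  from \<open>step (dual r') Tau d1\<close> show ?thesis
  proof (cases rule: step_TauE)
    case 1
    with r r' join show ?thesis
      by (auto intro: dual_pairs.joinable SC_unfold unfold_joinable_unfold_right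
          simp: sys_right unfold_dual)
  next
    case (2 ys l s)
    then obtain xs s0 where "r' = Ext xs" "(l, s0) \<in> set xs" "s = dual s0"
      by (auto simp: dual_eq_Intc)
    with r join show ?thesis by (auto intro: dual_pairs.right_committed simp: sys_right 2)
  qed
next
  case (sys_sync a1 a2)
  then have "a1 \<noteq> Tau" "a2 \<noteq> Tau" by auto
  with sys_sync have "\<not> is_Mu r" "\<not> is_Mu r'"
    using not_Mu_if_visible_step[of r a1 r1] not_Mu_if_visible_step[of "dual r'" a2 d1] by auto
  with join have "r' = r" using unfold_joinable_not_Mu by metis
  with sys_sync have "d1 = dual r1" by (auto intro: step_dual_sync)
  with r sys_sync show ?thesis by (auto intro: dual_pairs.joinable step_SC unfold_joinable_refl)
qed

lemma dual_pairs_step_left_committed: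
  assumes r': "r' \<in> SC" and join: "unfold_joinable (Intc xs) r'" and ls: "(l, s) \<in> set xs"
    and "sys_step Lb B (Intc [(l, s)]) (dual r') r1 d1"
  shows "(r1, d1) \<in> dual_pairs"
  using assms(4)
proof cases
  case sys_left
  then show ?thesis by simp
next
  case sys_right
  from \<open>step (dual r') Tau d1\<close> show ?thesis
  proof (cases rule: step_TauE)
    case 1
    with r' join show ?thesis
      by (auto intro: dual_pairs.left_committed[OF _ _ ls] SC_unfold unfold_joinable_unfold_right
          simp: sys_right unfold_dual)
  next
    case 2
    then obtain zs where "r' = Ext zs" by (auto simp: dual_eq_Intc)
    with join show ?thesis using unfold_joinable_not_Mu by (force simp: is_Mu_def)
  qed
next
  case (sys_sync a1 a2)
  then have a2: "a2 = AInL l" and r1: "r1 = s" by (cases a2; auto)+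
  with sys_sync have "\<not> is_Mu r'" using not_Mu_if_visible_step[of "dual r'"] by auto
  then have r'_Intc: "r' = Intc xs" using unfold_joinable_not_Mu[OF join] by (simp add: is_Mu_def)
  with sys_sync a2 obtain s' where s': "(l, s') \<in> set xs" "d1 = dual s'" by auto
  have "Intc xs \<in> SC" using r' r'_Intc by simp
  then have "distinct (map fst xs)" "s \<in> SC" using ls SC_Intc_branch by (auto simp: SC_def)
  with s' have "d1 = dual s" using eq_key_imp_eq_value[OF _ _ ls] by metis
  with r1 \<open>s \<in> SC\<close> show ?thesis by (auto intro: dual_pairs.joinable unfold_joinable_refl)
qed

lemma dual_pairs_step_right_committed:
  assumes r: "r \<in> SC" and join: "unfold_joinable r (Ext xs)" and ls: "(l, s) \<in> set xs"
    and "sys_step Lb B r (Intc [(l, dual s)]) r1 d1"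
  shows "(r1, d1) \<in> dual_pairs"
  using assms(4)
proof cases
  case sys_left
  from \<open>step r Tau r1\<close> show ?thesis
  proof (cases rule: step_TauE)
    case 1
    with r join show ?thesis
      by (auto intro: dual_pairs.right_committed[OF _ _ ls] SC_unfold unfold_joinable_unfold_left
          simp: sys_left)
  next
    case 2
    with join show ?thesis using unfold_joinable_not_Mu by (force simp: is_Mu_def)
  qed
next
  case sys_right
  then show ?thesis by simp
next
  case (sys_sync a1 a2)
  then have a1: "a1 = AInL l" and d1: "d1 = dual s" by (cases a1; auto)+
  with sys_sync have "\<not> is_Mu r" using not_Mu_if_visible_step[of r] by auto
  then have r_Ext: "r = Ext xs" using unfold_joinable_not_Mu[OF join] by (simp add: is_Mu_def)
  with sys_sync a1 have r1: "(l, r1) \<in> set xs" by auto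
  have "Ext xs \<in> SC" using r r_Ext by simp
  then have "distinct (map fst xs)" "s \<in> SC" using ls SC_Ext_branch by (auto simp: SC_def)
  with r1 have "r1 = s" using eq_key_imp_eq_value[OF _ _ ls] by metis
  with d1 \<open>s \<in> SC\<close> show ?thesis by (auto intro: dual_pairs.joinable unfold_joinable_refl)
qed

lemma dual_pairs_closed:
  "(r, d) \<in> dual_pairs \<Longrightarrow> sys_step Lb B r d r1 d1 \<Longrightarrow> (r1, d1) \<in> dual_pairs"
  by (induct rule: dual_pairs.induct)
    (auto intro: dual_pairs_step_joinable dual_pairs_step_left_committed dual_pairs_step_right_committed)

lemma sys_step_Mu_left: "is_Mu r \<Longrightarrow> sys_step Lb B r d (unfold r) d"
  by (rule sys_left) (simp add: step_Mu)

lemma sys_step_Mu_right: "is_Mu d \<Longrightarrow> sys_step Lb B r d r (unfold d)"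
  by (rule sys_right) (simp add: step_Mu)

lemma sys_step_dual:
  assumes Lb: "refl Lb" and B: "refl_on SC B" and r: "r \<in> SC" "\<not> is_Mu r" "r \<noteq> One"
  shows "\<exists>r1 d1. sys_step Lb B r (dual r) r1 d1"
proof (cases r)
  case (InT t s)
  with Lb have "sys_step Lb B r (dual r) s (dual s)"
    by (auto intro!: sys_sync[of _ "AInT t" _ _ "AOutT t"] step.intros dest: refl_onD)
  then show ?thesis by blast
next
  case (OutT t s)
  with Lb have "sys_step Lb B r (dual r) s (dual s)"
    by (auto intro!: sys_sync[of _ "AOutT t" _ _ "AInT t"] step.intros dest: refl_onD)
  then show ?thesis by blast
next
  case (InS m s)
  with r B have "sys_step Lb B r (dual r) s (dual s)"
    by (auto intro!: sys_sync[of _ "AInS m" _ _ "AOutS m"] step.intros dest: refl_onD simp: SC_def)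
  then show ?thesis by blast
next
  case (OutS m s)
  with r B have "sys_step Lb B r (dual r) s (dual s)"
    by (auto intro!: sys_sync[of _ "AOutS m" _ _ "AInS m"] step.intros dest: refl_onD simp: SC_def)
  then show ?thesis by blast
next
  case (Ext xs)
  with r obtain l s ys where xs: "xs = (l, s) # ys" by (cases xs) (auto simp: SC_def)
  show ?thesis
  proof (cases ys)
    case Nil
    with Ext xs have "sys_step Lb B r (dual r) s (dual s)"
      by (auto intro!: sys_sync[of _ "AInL l" _ _ "AOutL l"] step.intros)
    then show ?thesis by blast
  next
    case Cons
    with Ext xs have "sys_step Lb B r (dual r) r (Intc [(l, dual s)])"
      by (auto intro!: sys_right s_intc)
    then show ?thesis by blast
  qed
next
  case (Intc xs)
  with r obtain l s ys where xs: "xs = (l, s) # ys" by (cases xs) (auto simp: SC_def)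
  show ?thesis
  proof (cases ys)
    case Nil
    with Intc xs have "sys_step Lb B r (dual r) s (dual s)"
      by (auto intro!: sys_sync[of _ "AOutL l" _ _ "AInL l"] step.intros)
    then show ?thesis by blast
  next
    case Cons
    with Intc xs have "sys_step Lb B r (dual r) (Intc [(l, s)]) (dual r)"
      by (auto intro!: sys_left s_intc)
    then show ?thesis by blast
  qed
qed (use r in \<open>auto simp: is_Mu_def SC_def\<close>)

lemma dual_pairs_progress:
  assumes Lb: "refl Lb" and B: "refl_on SC B" and "(r, d) \<in> dual_pairs"
  shows "(\<exists>r1 d1. sys_step Lb B r d r1 d1) \<or> r = One \<and> d = One"
  using assms(3)
proof cases
  case (joinable r')
  consider "is_Mu r" | "is_Mu r'" | "\<not> is_Mu r" "\<not> is_Mu r'" by blast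
  then show ?thesis
  proof cases
    case 1
    then show ?thesis using sys_step_Mu_left by blast
  next
    case 2
    with joinable have "is_Mu d" by simp
    then show ?thesis using sys_step_Mu_right by blast
  next
    case 3
    with joinable have "r' = r" using unfold_joinable_not_Mu by metis
    with joinable 3 show ?thesis using sys_step_dual[OF Lb B] by (cases "r = One") auto
  qed
next
  case (left_committed r' xs l s)
  show ?thesis
  proof (cases "is_Mu r'")
    case True
    with left_committed have "is_Mu d" by simp
    then show ?thesis using sys_step_Mu_right by blast
  next
    case False
    with left_committed have "r' = Intc xs"
      using unfold_joinable_not_Mu by (force simp: is_Mu_def)
    with left_committed have "sys_step Lb B r d s (dual s)"
      by (auto intro!: sys_sync[of _ "AOutL l" _ _ "AInL l"] step.intros rev_image_eqI)
    then show ?thesis by blast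
  qed
next
  case (right_committed xs l s)
  show ?thesis
  proof (cases "is_Mu r")
    case True
    then show ?thesis using sys_step_Mu_left by blast
  next
    case False
    with right_committed have "r = Ext xs"
      using unfold_joinable_not_Mu by (force simp: is_Mu_def)
    with right_committed have "sys_step Lb B r d s (dual s)"
      by (auto intro!: sys_sync[of _ "AInL l" _ _ "AOutL l"] step.intros)
    then show ?thesis by blast
  qed
qed

lemma compliance_rel_dual_pairs:
  assumes "refl Lb" and "refl_on SC B"
  shows "compliance_rel Lb B dual_pairs"
  unfolding compliance_rel_def
  using dual_pairs_SC dual_pairs_closed dual_pairs_progress[OF assms] s_one by blast

theorem mainTheorem7:
  fixes Lb :: "('b \<times> 'b) set" and B :: "(('b, 'l) ctr \<times> ('b, 'l) ctr) set"
    and \<rho> :: "('b, 'l) ctr"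
  assumes "preorder_on UNIV Lb"
    and "preorder_on SC B"
    and "\<rho> \<in> SC"
  shows "compliant Lb B \<rho> (dual \<rho>)"
proof -
  have "refl Lb" "refl_on SC B" using assms(1,2) by (simp_all add: preorder_on_def)
  then have "compliance_rel Lb B dual_pairs" by (rule compliance_rel_dual_pairs)
  moreover have "(\<rho>, dual \<rho>) \<in> dual_pairs"
    by (intro dual_pairs.joinable assms(3) unfold_joinable_refl)
  ultimately show ?thesis unfolding compliant_def by blast
qed

end
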